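(* Assume all $\lambda_k>0$ and $\mu_k>0$, and let $\bar X=(\bar X_{i,k})$ have the stationary distribution of the two-layer loss system with parameters $(m,n,\lambda,\mu)$. Then for each class $k$: $\mathrm{Erl}(m_k,\lambda_k/\mu_k)\le_{\mathrm{st}}\bar X_{1,k}+\bar X_{2,k}\le_{\mathrm{st}}\mathrm{Erl}(m_k+n,\lambda_k/\mu_k)$. Consequently, with $a_k=\mathbb{E}(\bar X_{1,k}+\bar X_{2,k})$, $\theta_k=\mu_k a_k$ and $b_k=P(\bar X\in B_k)$: $a_{\mathrm{Erl}}(m_k,\lambda_k/\mu_k)\le a_k\le a_{\mathrm{Erl}}(m_k+n,\lambda_k/\mu_k)$, $\mu_k a_{\mathrm{Erl}}(m_k,\lambda_k/\mu_k)\le\theta_k\le\mu_k a_{\mathrm{Erl}}(m_k+n,\lambda_k/\mu_k)$, $b_{\mathrm{Erl}}(m_k+n,\lambda_k/\mu_k)\le b_k\le b_{\mathrm{Erl}}(m_k,\lambda_k/\mu_k)$.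
   Context: Two-layer loss system with parameters $(m,n,\lambda,\mu)$: Markov process on $S=\{x\in\mathbb{Z}_+^K\times\mathbb{Z}_+^K:x_{1,k}\le m_k\ \forall k,\ \sum_kx_{2,k}\le n\}$ ($x_{i,k}$ = number of class-$k$ customers at layer $i$) with transitions $x\mapsto x+e_{1,k}$ at rate $\lambda_k1(x_{1,k}<m_k)$, $x\mapsto x+e_{2,k}$ at rate $\lambda_k1(x_{1,k}=m_k,\sum_lx_{2,l}<n)$, $x\mapsto x-e_{i,k}$ at rate $\mu_kx_{i,k}$. $B_k=\{x\in S:x_{1,k}=m_k,\ \sum_lx_{2,l}=n\}$ is the set of states where class-$k$ arrivals are rejected, so $b_k$ is the class-$k$ blocking probability and $\theta_k$ the mean class-$k$ throughput (satisfying $\lambda_k(1-b_k)=\theta_k$). $\mathrm{Erl}(s,\rho)$ denotes a random variable on $\{0,\dots,s\}$ with $P(\mathrm{Erl}(s,\rho)=i)=\frac{\rho^i/i!}{\sum_{j=0}^s\rho^j/j!}$; $a_{\mathrm{Erl}}(s,\rho)$ is its mean and $b_{\mathrm{Erl}}(s,\rho)=P(\mathrm{Erl}(s,\rho)=s)$ (Erlang B formula). $\le_{\mathrm{st}}$ between real random variables is the usual stochastic order. *)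

theory Defs
  imports "HOL-Probability.Probability"
begin

text \<open>Classes are indexed by a finite type 'k. A state is a pair (x1, x2) of
  class-indexed counts: x1 k = customers of class k at layer 1, x2 k at layer 2.\<close>

type_synonym 'k state = "('k \<Rightarrow> nat) \<times> ('k \<Rightarrow> nat)"

definition tl_space :: "('k::finite \<Rightarrow> nat) \<Rightarrow> nat \<Rightarrow> 'k state set" where
  "tl_space m n = {x. (\<forall>k. fst x k \<le> m k) \<and> (\<Sum>l\<in>UNIV. snd x l) \<le> n}"

definition tl_rate :: "('k::finite \<Rightarrow> nat) \<Rightarrow> nat \<Rightarrow> ('k \<Rightarrow> real) \<Rightarrow> ('k \<Rightarrow> real)
    \<Rightarrow> 'k state \<Rightarrow> 'k state \<Rightarrow> real" where
  "tl_rate m n lam mu x y = (\<Sum>k\<in>UNIV.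
      (if fst x k < m k \<and> y = ((fst x)(k := fst x k + 1), snd x) then lam k else 0)
    + (if fst x k = m k \<and> (\<Sum>l\<in>UNIV. snd x l) < n \<and> y = (fst x, (snd x)(k := snd x k + 1))
       then lam k else 0)
    + (if 0 < fst x k \<and> y = ((fst x)(k := fst x k - 1), snd x) then mu k * real (fst x k) else 0)
    + (if 0 < snd x k \<and> y = (fst x, (snd x)(k := snd x k - 1)) then mu k * real (snd x k) else 0))"

definition tl_stationary :: "('k::finite \<Rightarrow> nat) \<Rightarrow> nat \<Rightarrow> ('k \<Rightarrow> real) \<Rightarrow> ('k \<Rightarrow> real)
    \<Rightarrow> 'k state pmf \<Rightarrow> bool" where
  "tl_stationary m n lam mu p \<longleftrightarrow> set_pmf p \<subseteq> tl_space m n \<and>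
     (\<forall>y\<in>tl_space m n. pmf p y * (\<Sum>z\<in>tl_space m n. tl_rate m n lam mu y z)
        = (\<Sum>x\<in>tl_space m n. pmf p x * tl_rate m n lam mu x y))"

definition tl_block :: "('k::finite \<Rightarrow> nat) \<Rightarrow> nat \<Rightarrow> 'k \<Rightarrow> 'k state set" where
  "tl_block m n k = {x \<in> tl_space m n. fst x k = m k \<and> (\<Sum>l\<in>UNIV. snd x l) = n}"

definition erl_pmf :: "nat \<Rightarrow> real \<Rightarrow> nat pmf" where
  "erl_pmf s rho = embed_pmf (\<lambda>i. if i \<le> s
      then (rho ^ i / fact i) / (\<Sum>j\<le>s. rho ^ j / fact j) else 0)"

definition a_erl :: "nat \<Rightarrow> real \<Rightarrow> real" where
  "a_erl s rho = measure_pmf.expectation (erl_pmf s rho) real"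

definition b_erl :: "nat \<Rightarrow> real \<Rightarrow> real" where
  "b_erl s rho = pmf (erl_pmf s rho) s"

definition st_le :: "real pmf \<Rightarrow> real pmf \<Rightarrow> bool" where
  "st_le p q \<longleftrightarrow> (\<forall>t. measure_pmf.prob p {t<..} \<le> measure_pmf.prob q {t<..})"

end

theory Submission
  imports Defs
begin

text \<open>
  Fix a class \<open>k\<close> and let \<open>Z = X\<^sub>1\<^sub>,\<^sub>k + X\<^sub>2\<^sub>,\<^sub>k\<close> and \<open>\<rho> = \<lambda>\<^sub>k/\<mu>\<^sub>k\<close>.  Applying the stationarity
  (global balance) equations to test functions of \<open>Z\<close> shows that, in equilibrium, \<open>Z\<close> behaves
  like a birth-death process whose births are the accepted class-\<open>k\<close> arrivals.  The test function
  \<open>1(Z \<le> z)\<close> yields the cut inequalities \<open>(z+1)\<cdot>P(Z=z+1) \<le> \<rho>\<cdot>P(Z=z)\<close>, with equality for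
  \<open>z < m\<^sub>k\<close> because arrivals are never blocked there.  Hence \<open>P(Z=z)/(\<rho>\<^sup>z/z!)\<close> is
  nonincreasing and constant on \<open>{0..m\<^sub>k}\<close>, which puts the law of \<open>Z\<close> between \<open>Erl(m\<^sub>k,\<rho>)\<close> and
  \<open>Erl(m\<^sub>k+n,\<rho>)\<close> in the likelihood-ratio order, and so in the stochastic order and in mean.
  The test function \<open>Z\<close> gives the flow balance \<open>\<lambda>\<^sub>k(1-b\<^sub>k) = \<mu>\<^sub>k\<cdot>E Z\<close>; combined with the
  corresponding identity for the Erlang distribution it turns the mean bounds into the bounds on
  the blocking probability.
\<close>

lemma expectation_finite_support:
  assumes "finite S" "set_pmf q \<subseteq> S"
  shows "measure_pmf.expectation q f = (\<Sum>x\<in>S. f x * pmf q x)"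
  by (rule integral_measure_pmf_real) (use assms in auto)

lemma prob_finite_support:
  assumes "finite S" "set_pmf q \<subseteq> S"
  shows "measure_pmf.prob q A = (\<Sum>x\<in>S. if x \<in> A then pmf q x else 0)"
proof -
  have "measure_pmf.prob q A = measure_pmf.expectation q (indicator A)" by simp
  also have "\<dots> = (\<Sum>x\<in>S. indicator A x * pmf q x)"
    by (rule expectation_finite_support[OF assms])
  finally show ?thesis by (auto simp: indicator_def intro!: sum.cong)
qed

lemma prob_eq_on_support:
  "A \<inter> set_pmf p = B \<inter> set_pmf p \<Longrightarrow> measure_pmf.prob p A = measure_pmf.prob p B"
  by (metis measure_Int_set_pmf)

definition erl_weight :: "real \<Rightarrow> nat \<Rightarrow> real" where
  "erl_weight rho i = rho ^ i / fact i"

lemma erl_weight_pos: "rho > 0 \<Longrightarrow> erl_weight rho i > 0"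
  unfolding erl_weight_def by simp

lemma erl_weight_sum_pos: "rho > 0 \<Longrightarrow> (\<Sum>j\<le>s. erl_weight rho j) > 0"
  by (rule sum_pos2[where i=0]) (auto intro: less_imp_le erl_weight_pos)

text \<open>The weights satisfy the detailed balance relation of an M/M/\<open>\<infinity>\<close> queue.\<close>
lemma erl_weight_Suc: "real (Suc i) * erl_weight rho (Suc i) = rho * erl_weight rho i"
  unfolding erl_weight_def fact_Suc by (simp del: of_nat_Suc)

lemma pmf_erl_pmf:
  assumes "rho > 0"
  shows "pmf (erl_pmf s rho) i
    = (if i \<le> s then erl_weight rho i / (\<Sum>j\<le>s. erl_weight rho j) else 0)"
proof -
  let ?E = "\<Sum>j\<le>s. erl_weight rho j"
  let ?f = "\<lambda>i. if i \<le> s then erl_weight rho i / ?E else 0"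
  have nonneg: "0 \<le> ?f i" for i
    using erl_weight_pos[OF assms] erl_weight_sum_pos[OF assms] by (simp add: less_imp_le)
  have "(\<integral>\<^sup>+x. ennreal (?f x) \<partial>count_space UNIV) = (\<Sum>x\<le>s. ennreal (?f x))"
    by (subst nn_integral_count_space'[of "{..s}"]) auto
  also have "\<dots> = ennreal (\<Sum>x\<le>s. ?f x)"
    by (rule sum_ennreal[OF nonneg])
  also have "(\<Sum>x\<le>s. ?f x) = 1"
    using erl_weight_sum_pos[OF assms, of s] by (simp flip: sum_divide_distrib)
  finally show ?thesis
    unfolding erl_pmf_def erl_weight_def[symmetric]
    using nonneg by (subst pmf_embed_pmf) auto
qed

lemma set_pmf_erl_pmf: "rho > 0 \<Longrightarrow> set_pmf (erl_pmf s rho) \<subseteq> {..s}"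
  by (auto simp: set_pmf_iff pmf_erl_pmf split: if_splits)

text \<open>Since \<open>i\<cdot>\<rho>\<^sup>i/i! = \<rho>\<cdot>\<rho>\<^sup>i\<^sup>-\<^sup>1/(i-1)!\<close>, the first moment of the weights on \<open>{0..s}\<close> is
  \<open>\<rho>\<close> times their total mass without the top weight.\<close>
lemma erl_weight_mean_sum:
  "(\<Sum>i\<le>s. real i * erl_weight rho i) = rho * ((\<Sum>i\<le>s. erl_weight rho i) - erl_weight rho s)"
proof (induction s)
  case (Suc s)
  have "(\<Sum>i\<le>Suc s. real i * erl_weight rho i)
      = (\<Sum>i\<le>s. real i * erl_weight rho i) + real (Suc s) * erl_weight rho (Suc s)"
    by (rule sum.atMost_Suc)
  also have "\<dots> = rho * ((\<Sum>i\<le>s. erl_weight rho i) - erl_weight rho s) + rho * erl_weight rho s"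
    by (simp only: Suc.IH erl_weight_Suc)
  finally show ?case by (simp add: algebra_simps)
qed (simp add: erl_weight_def)

lemma a_erl_eq_b_erl:
  assumes "rho > 0"
  shows "a_erl s rho = rho * (1 - b_erl s rho)"
proof -
  let ?E = "\<Sum>j\<le>s. erl_weight rho j"
  have "a_erl s rho = (\<Sum>z\<le>s. real z * pmf (erl_pmf s rho) z)"
    unfolding a_erl_def by (rule expectation_finite_support[OF _ set_pmf_erl_pmf[OF assms]]) simp
  also have "\<dots> = (\<Sum>z\<le>s. real z * erl_weight rho z) / ?E"
    by (simp add: pmf_erl_pmf[OF assms] sum_divide_distrib)
  also have "\<dots> = rho * (1 - erl_weight rho s / ?E)"
    using erl_weight_sum_pos[OF assms, of s] by (simp add: erl_weight_mean_sum field_simps)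
  also have "erl_weight rho s / ?E = b_erl s rho"
    unfolding b_erl_def pmf_erl_pmf[OF assms] by simp
  finally show ?thesis .
qed

text \<open>Likelihood-ratio order on distributions over \<open>\<nat>\<close>: \<open>q\<^sub>2/q\<^sub>1\<close> is nondecreasing.\<close>
definition lr_le :: "nat pmf \<Rightarrow> nat pmf \<Rightarrow> bool" where
  "lr_le q1 q2 \<longleftrightarrow> (\<forall>a b. b < a \<longrightarrow> pmf q1 a * pmf q2 b \<le> pmf q1 b * pmf q2 a)"

text \<open>The likelihood-ratio order implies the stochastic order on upward closed sets:
  the probability mass of \<open>U\<times>U\<^sup>c\<close> under \<open>q\<^sub>1\<otimes>q\<^sub>2\<close> is at most that under \<open>q\<^sub>2\<otimes>q\<^sub>1\<close>.\<close>
lemma lr_le_upset: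
  assumes lr: "lr_le q1 q2"
    and supp1: "set_pmf q1 \<subseteq> {..N}" and supp2: "set_pmf q2 \<subseteq> {..N}"
    and up: "\<And>a b. b \<in> U \<Longrightarrow> b \<le> a \<Longrightarrow> a \<in> U"
  shows "measure_pmf.prob q1 U \<le> measure_pmf.prob q2 U"
proof -
  define I where "I = {..N} \<inter> U"
  define J where "J = {..N} - U"
  have prob_U: "measure_pmf.prob q U = sum (pmf q) I"
    and prob_not_U: "sum (pmf q) J = 1 - measure_pmf.prob q U"
    if "set_pmf q \<subseteq> {..N}" for q
  proof -
    show "measure_pmf.prob q U = sum (pmf q) I"
      using prob_finite_support[OF _ that, of U] by (simp add: I_def sum.inter_restrict)
    moreover have "sum (pmf q) {..N} = 1"
      using sum_pmf_eq_1[OF _ that] by simp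
    ultimately show "sum (pmf q) J = 1 - measure_pmf.prob q U"
      unfolding I_def J_def by (simp add: sum.Int_Diff[of "{..N}" _ U])
  qed
  let ?u1 = "measure_pmf.prob q1 U" and ?u2 = "measure_pmf.prob q2 U"
  have "?u1 * (1 - ?u2) = (\<Sum>a\<in>I. \<Sum>b\<in>J. pmf q1 a * pmf q2 b)"
    by (simp add: prob_U[OF supp1] flip: prob_not_U[OF supp2] sum_product)
  also have "\<dots> \<le> (\<Sum>a\<in>I. \<Sum>b\<in>J. pmf q2 a * pmf q1 b)"
  proof (intro sum_mono)
    fix a b assume "a \<in> I" "b \<in> J"
    then have "b < a"
      using up[of a b] unfolding I_def J_def by (meson Diff_iff IntD2 not_le less_imp_le)
    then show "pmf q1 a * pmf q2 b \<le> pmf q2 a * pmf q1 b"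
      using lr unfolding lr_le_def by (simp add: mult.commute)
  qed
  also have "\<dots> = ?u2 * (1 - ?u1)"
    by (simp add: prob_U[OF supp2] flip: prob_not_U[OF supp1] sum_product)
  finally show ?thesis by (simp add: algebra_simps)
qed

text \<open>Tails \<open>{z. t < z}\<close> are upward closed, giving the usual stochastic order.\<close>
lemma lr_le_st_le:
  assumes "lr_le q1 q2" "set_pmf q1 \<subseteq> {..N}" "set_pmf q2 \<subseteq> {..N}"
  shows "st_le (map_pmf real q1) (map_pmf real q2)"
  unfolding st_le_def measure_map_pmf
  by (intro allI lr_le_upset[OF assms]) auto

lemma expectation_tail_sum:
  assumes supp: "set_pmf q \<subseteq> {..N}"
  shows "measure_pmf.expectation q real = (\<Sum>j\<in>{1..N}. measure_pmf.prob q {j..})"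
proof -
  have "(\<Sum>j\<in>{1..N}. measure_pmf.prob q {j..})
      = (\<Sum>j\<in>{1..N}. \<Sum>z\<le>N. if j \<le> z then pmf q z else 0)"
    by (simp add: prob_finite_support[OF _ supp])
  also have "\<dots> = (\<Sum>z\<le>N. \<Sum>j\<in>{1..N}. if j \<le> z then pmf q z else 0)"
    by (rule sum.swap)
  also have "\<dots> = (\<Sum>z\<le>N. real z * pmf q z)"
  proof (rule sum.cong[OF refl])
    fix z assume "z \<in> {..N}"
    then have "{j\<in>{1..N}. j \<le> z} = {1..z}" by auto
    then show "(\<Sum>j\<in>{1..N}. if j \<le> z then pmf q z else 0) = real z * pmf q z"
      by (simp add: sum.inter_filter[symmetric])
  qed
  also have "\<dots> = measure_pmf.expectation q real"
    by (rule expectation_finite_support[OF _ supp, symmetric]) simp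
  finally show ?thesis ..
qed

lemma lr_le_expectation:
  assumes "lr_le q1 q2" "set_pmf q1 \<subseteq> {..N}" "set_pmf q2 \<subseteq> {..N}"
  shows "measure_pmf.expectation q1 real \<le> measure_pmf.expectation q2 real"
  unfolding expectation_tail_sum[OF assms(2)] expectation_tail_sum[OF assms(3)]
  by (intro sum_mono lr_le_upset[OF assms]) auto

lemma erl_ratio_Suc:
  assumes "rho > 0"
  shows "f (Suc z) / erl_weight rho (Suc z) = real (Suc z) * f (Suc z) / (rho * erl_weight rho z)"
  using erl_weight_Suc[of z rho, symmetric] erl_weight_pos[OF assms, of "Suc z"]
  by (simp add: field_simps del: of_nat_Suc)

text \<open>If the cut equations \<open>(z+1)\<cdot>q(z+1) = \<rho>\<cdot>q(z)\<close> hold below \<open>s\<close>, then \<open>q/Erl\<close> is constant on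
  \<open>{0..s}\<close>, so \<open>Erl(s,\<rho>)\<close> is below \<open>q\<close> in likelihood ratio.\<close>
lemma erl_lr_le_of_cut_eq:
  assumes rho: "rho > 0"
    and eq: "\<And>z. z < s \<Longrightarrow> real (Suc z) * pmf q (Suc z) = rho * pmf q z"
  shows "lr_le (erl_pmf s rho) q"
proof -
  define w where "w z = pmf q z / erl_weight rho z" for z
  have pmf_q: "pmf q z = w z * erl_weight rho z" for z
    unfolding w_def using erl_weight_pos[OF rho, of z] by simp
  have w_const: "z \<le> s \<Longrightarrow> w z = w 0" for z
  proof (induction z)
    case (Suc z)
    then have "z < s" by simp
    then have "w (Suc z) = w z"
      unfolding w_def erl_ratio_Suc[OF rho] eq[OF \<open>z < s\<close>]
      using rho erl_weight_pos[OF rho, of z] by simp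
    with Suc show ?case by simp
  qed simp
  have "pmf (erl_pmf s rho) a * pmf q b \<le> pmf (erl_pmf s rho) b * pmf q a" if "b < a" for a b
  proof (cases "a \<le> s")
    case True
    then have "w a = w b"
      using \<open>b < a\<close> w_const[of a] w_const[of b] by simp
    with True \<open>b < a\<close> show ?thesis
      by (simp add: pmf_erl_pmf[OF rho] pmf_q ac_simps)
  qed (use erl_weight_pos[OF rho] erl_weight_sum_pos[OF rho, of s] in
        \<open>simp add: pmf_erl_pmf[OF rho] less_imp_le\<close>)
  then show ?thesis unfolding lr_le_def by blast
qed

text \<open>If the cut inequalities \<open>(z+1)\<cdot>q(z+1) \<le> \<rho>\<cdot>q(z)\<close> hold everywhere, then \<open>q/Erl\<close> is
  nonincreasing, so \<open>q\<close> is below \<open>Erl(N,\<rho>)\<close> for any bound \<open>N\<close> of its support.\<close>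
lemma lr_le_erl_of_cut_le:
  assumes rho: "rho > 0" and supp: "set_pmf q \<subseteq> {..N}"
    and cut: "\<And>z. real (Suc z) * pmf q (Suc z) \<le> rho * pmf q z"
  shows "lr_le q (erl_pmf N rho)"
proof -
  define w where "w z = pmf q z / erl_weight rho z" for z
  have pmf_q: "pmf q z = w z * erl_weight rho z" for z
    unfolding w_def using erl_weight_pos[OF rho, of z] by simp
  have "w (Suc z) \<le> w z" for z
    unfolding w_def erl_ratio_Suc[OF rho]
    using divide_right_mono[OF cut[of z], of "rho * erl_weight rho z"] rho erl_weight_pos[OF rho, of z]
    by simp
  then have w_antimono: "b \<le> a \<Longrightarrow> w a \<le> w b" for a b
    using decseqD[OF decseq_SucI] by blast
  have "pmf q a * pmf (erl_pmf N rho) b \<le> pmf q b * pmf (erl_pmf N rho) a" if "b < a" for a b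
  proof (cases "a \<le> N")
    case True
    let ?c = "erl_weight rho a * erl_weight rho b / (\<Sum>j\<le>N. erl_weight rho j)"
    have "0 \<le> ?c"
      using erl_weight_pos[OF rho] erl_weight_sum_pos[OF rho, of N] by (simp add: less_imp_le)
    then have "w a * ?c \<le> w b * ?c"
      using \<open>b < a\<close> by (intro mult_right_mono w_antimono) simp_all
    with True \<open>b < a\<close> show ?thesis
      by (simp add: pmf_erl_pmf[OF rho] pmf_q ac_simps)
  next
    case False
    then have "pmf q a = 0" using supp by (auto simp: set_pmf_iff)
    then show ?thesis by simp
  qed
  then show ?thesis unfolding lr_le_def by blast
qed

lemma finite_bounded_funs: "finite {f :: 'k::finite \<Rightarrow> nat. \<forall>k. f k \<le> c k}"
proof -
  have "{f :: 'k \<Rightarrow> nat. \<forall>k. f k \<le> c k} = Pi\<^sub>E UNIV (\<lambda>k. {..c k})"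
    by (auto simp: PiE_UNIV_domain Pi_def)
  then show ?thesis by (simp add: finite_PiE)
qed

lemma finite_tl_space: "finite (tl_space (m :: 'k::finite \<Rightarrow> nat) n)"
proof (rule finite_subset)
  have "snd x l \<le> n" if "x \<in> tl_space m n" for x l
    using member_le_sum[of l UNIV "snd x"] that unfolding tl_space_def by auto
  then show "tl_space m n \<subseteq> {f. \<forall>k. f k \<le> m k} \<times> {f. \<forall>k. f k \<le> (\<lambda>_. n) k}"
    unfolding tl_space_def by auto
  show "finite ({f. \<forall>k. f k \<le> m k} \<times> {f :: 'k \<Rightarrow> nat. \<forall>k. f k \<le> (\<lambda>_. n) k})"
    using finite_bounded_funs[of m] finite_bounded_funs[of "\<lambda>_::'k. n"]
    by (intro finite_cartesian_product) auto
qed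

lemma sum_fun_upd_nat:
  "(\<Sum>l\<in>UNIV. ((f :: 'k::finite \<Rightarrow> nat)(j := v)) l) + f j = (\<Sum>l\<in>UNIV. f l) + v"
proof -
  have "(\<Sum>l\<in>UNIV-{j}. (f(j := v)) l) = (\<Sum>l\<in>UNIV-{j}. f l)"
    by (rule sum.cong) auto
  then show ?thesis
    by (simp add: sum.remove[of UNIV j])
qed

definition arrive1 :: "'k \<Rightarrow> 'k state \<Rightarrow> 'k state" where
  "arrive1 j x = ((fst x)(j := fst x j + 1), snd x)"

definition arrive2 :: "'k \<Rightarrow> 'k state \<Rightarrow> 'k state" where
  "arrive2 j x = (fst x, (snd x)(j := snd x j + 1))"

definition depart1 :: "'k \<Rightarrow> 'k state \<Rightarrow> 'k state" where
  "depart1 j x = ((fst x)(j := fst x j - 1), snd x)"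

definition depart2 :: "'k \<Rightarrow> 'k state \<Rightarrow> 'k state" where
  "depart2 j x = (fst x, (snd x)(j := snd x j - 1))"

lemma moves_in_tl_space:
  assumes x: "x \<in> tl_space m n"
  shows "fst x j < m j \<Longrightarrow> arrive1 j x \<in> tl_space m n"
    and "(\<Sum>l\<in>UNIV. snd x l) < n \<Longrightarrow> arrive2 j x \<in> tl_space m n"
    and "depart1 j x \<in> tl_space m n"
    and "0 < snd x j \<Longrightarrow> depart2 j x \<in> tl_space m n"
proof -
  have xm: "\<forall>k. fst x k \<le> m k" and xn: "(\<Sum>l\<in>UNIV. snd x l) \<le> n"
    using x unfolding tl_space_def by auto
  show "fst x j < m j \<Longrightarrow> arrive1 j x \<in> tl_space m n"
    using xm xn unfolding tl_space_def arrive1_def by auto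
  show "(\<Sum>l\<in>UNIV. snd x l) < n \<Longrightarrow> arrive2 j x \<in> tl_space m n"
    using xm sum_fun_upd_nat[of "snd x" j "snd x j + 1"] unfolding tl_space_def arrive2_def by auto
  show "depart1 j x \<in> tl_space m n"
    using xm xn unfolding tl_space_def depart1_def by (auto intro: le_trans[OF diff_le_self])
  show "0 < snd x j \<Longrightarrow> depart2 j x \<in> tl_space m n"
    using xm xn sum_fun_upd_nat[of "snd x" j "snd x j - 1"] unfolding tl_space_def depart2_def by auto
qed

lemma sum_rate_term:
  assumes "finite S" "P \<Longrightarrow> t \<in> S"
  shows "(\<Sum>y\<in>S. (if P \<and> y = t then c else 0) * G y) = (if P then c * (G t :: real) else 0)"
  using assms by (cases P) (simp_all add: if_distrib[of "\<lambda>a. a * G _"] sum.delta cong: if_cong)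

lemma tl_rate_weighted_sum:
  assumes x: "x \<in> tl_space m n"
  shows "(\<Sum>y\<in>tl_space m n. tl_rate m n lam mu x y * G y) =
    (\<Sum>j\<in>UNIV. (if fst x j < m j then lam j * G (arrive1 j x) else 0)
      + (if fst x j = m j \<and> (\<Sum>l\<in>UNIV. snd x l) < n then lam j * G (arrive2 j x) else 0)
      + (if 0 < fst x j then mu j * real (fst x j) * G (depart1 j x) else 0)
      + (if 0 < snd x j then mu j * real (snd x j) * G (depart2 j x) else 0))"
    (is "_ = ?rhs")
proof -
  let ?S = "tl_space m n"
  have fin: "finite ?S" by (rule finite_tl_space)
  have "(\<Sum>y\<in>?S. tl_rate m n lam mu x y * G y) =
     (\<Sum>j\<in>UNIV. (\<Sum>y\<in>?S. (if fst x j < m j \<and> y = arrive1 j x then lam j else 0) * G y)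
      + (\<Sum>y\<in>?S. (if (fst x j = m j \<and> (\<Sum>l\<in>UNIV. snd x l) < n) \<and> y = arrive2 j x
           then lam j else 0) * G y)
      + (\<Sum>y\<in>?S. (if 0 < fst x j \<and> y = depart1 j x then mu j * real (fst x j) else 0) * G y)
      + (\<Sum>y\<in>?S. (if 0 < snd x j \<and> y = depart2 j x then mu j * real (snd x j) else 0) * G y))"
    unfolding tl_rate_def arrive1_def arrive2_def depart1_def depart2_def sum_distrib_right
    by (subst sum.swap) (simp add: distrib_right sum.distrib conj_assoc)
  also have "\<dots> = ?rhs"
    by (simp add: sum_rate_term[OF fin] moves_in_tl_space[OF x] del: conj_assoc)
  finally show ?thesis .
qed

lemma stationary_generator_zero:
  assumes st: "tl_stationary m n lam mu p"
  shows "(\<Sum>x\<in>tl_space m n. pmf p x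
            * (\<Sum>y\<in>tl_space m n. tl_rate m n lam mu x y * (g y - g x))) = 0"
proof -
  let ?S = "tl_space m n" and ?q = "tl_rate m n lam mu"
  have balance: "y \<in> ?S \<Longrightarrow> pmf p y * (\<Sum>z\<in>?S. ?q y z) = (\<Sum>x\<in>?S. pmf p x * ?q x y)" for y
    using st unfolding tl_stationary_def by auto
  have "(\<Sum>x\<in>?S. pmf p x * (\<Sum>y\<in>?S. ?q x y * (g y - g x)))
      = (\<Sum>x\<in>?S. \<Sum>y\<in>?S. pmf p x * ?q x y * g y)
        - (\<Sum>x\<in>?S. g x * (pmf p x * (\<Sum>y\<in>?S. ?q x y)))"
    by (simp add: sum_distrib_left sum_subtractf algebra_simps flip: sum.distrib)
  also have "(\<Sum>x\<in>?S. \<Sum>y\<in>?S. pmf p x * ?q x y * g y) = (\<Sum>y\<in>?S. g y * (\<Sum>x\<in>?S. pmf p x * ?q x y))"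
    by (subst sum.swap) (simp add: sum_distrib_left algebra_simps)
  also have "\<dots> = (\<Sum>y\<in>?S. g y * (pmf p y * (\<Sum>z\<in>?S. ?q y z)))"
    using balance by (intro sum.cong) auto
  finally show ?thesis by simp
qed

definition class_count :: "'k \<Rightarrow> 'k state \<Rightarrow> nat" where
  "class_count k x = fst x k + snd x k"

definition accepts :: "('k::finite \<Rightarrow> nat) \<Rightarrow> nat \<Rightarrow> 'k \<Rightarrow> 'k state \<Rightarrow> bool" where
  "accepts m n k x \<longleftrightarrow> fst x k < m k \<or> (fst x k = m k \<and> (\<Sum>l\<in>UNIV. snd x l) < n)"

lemma class_count_moves:
  "class_count k (arrive1 j x) = class_count k x + (if j = k then 1 else 0)"
  "class_count k (arrive2 j x) = class_count k x + (if j = k then 1 else 0)"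
  "0 < fst x j \<Longrightarrow> class_count k (depart1 j x) = class_count k x - (if j = k then 1 else 0)"
  "0 < snd x j \<Longrightarrow> class_count k (depart2 j x) = class_count k x - (if j = k then 1 else 0)"
  unfolding class_count_def arrive1_def arrive2_def depart1_def depart2_def by auto

text \<open>The generator applied to a function of \<open>Z\<^sub>k\<close>: \<open>Z\<^sub>k\<close> is a birth-death process with state-dependent
  birth rate \<open>\<lambda>\<^sub>k\<cdot>1(accepted)\<close> and death rate \<open>\<mu>\<^sub>k\<cdot>Z\<^sub>k\<close>.\<close>
lemma class_count_drift:
  fixes h :: "nat \<Rightarrow> real" and k :: "'k::finite"
  assumes x: "x \<in> tl_space m n"
  defines "z \<equiv> class_count k x"
  shows "(\<Sum>y\<in>tl_space m n. tl_rate m n lam mu x y * (h (class_count k y) - h z))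
    = (if accepts m n k x then lam k * (h (z + 1) - h z) else 0)
      + mu k * real z * (h (z - 1) - h z)"
proof -
  define F where "F j =
      (if fst x j < m j then lam j * (h (class_count k (arrive1 j x)) - h z) else 0)
    + (if fst x j = m j \<and> (\<Sum>l\<in>UNIV. snd x l) < n
       then lam j * (h (class_count k (arrive2 j x)) - h z) else 0)
    + (if 0 < fst x j then mu j * real (fst x j) * (h (class_count k (depart1 j x)) - h z) else 0)
    + (if 0 < snd x j then mu j * real (snd x j) * (h (class_count k (depart2 j x)) - h z) else 0)"
    for j
  have "(\<Sum>y\<in>tl_space m n. tl_rate m n lam mu x y * (h (class_count k y) - h z)) = (\<Sum>j\<in>UNIV. F j)"
    unfolding tl_rate_weighted_sum[OF x] F_def ..
  also have "\<dots> = F k"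
    by (subst sum.mono_neutral_right[of UNIV "{k}"]) (auto simp: F_def class_count_moves z_def)
  also have "F k = (if accepts m n k x then lam k * (h (z + 1) - h z) else 0)
      + mu k * real z * (h (z - 1) - h z)"
  proof -
    have arrivals:
      "(if fst x k < m k then lam k * (h (class_count k (arrive1 k x)) - h z) else 0)
     + (if fst x k = m k \<and> (\<Sum>l\<in>UNIV. snd x l) < n
        then lam k * (h (class_count k (arrive2 k x)) - h z) else 0)
     = (if accepts m n k x then lam k * (h (z + 1) - h z) else 0)"
      by (auto simp: accepts_def class_count_moves z_def)
    have departures:
      "(if 0 < fst x k then mu k * real (fst x k) * (h (class_count k (depart1 k x)) - h z) else 0)
     + (if 0 < snd x k then mu k * real (snd x k) * (h (class_count k (depart2 k x)) - h z) else 0)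
     = mu k * real z * (h (z - 1) - h z)"
      using class_count_moves(3,4)[of x k k] by (auto simp: z_def class_count_def algebra_simps)
    show ?thesis using arrivals departures unfolding F_def by linarith
  qed
  finally show ?thesis .
qed

lemma class_count_balance:
  assumes st: "tl_stationary m n lam mu p"
  shows "(\<Sum>x\<in>tl_space m n. pmf p x *
      ((if accepts m n k x then lam k * (h (class_count k x + 1) - h (class_count k x)) else 0)
       + mu k * real (class_count k x) * (h (class_count k x - 1) - h (class_count k x)))) = 0"
proof -
  have "(\<Sum>x\<in>tl_space m n. pmf p x *
      ((if accepts m n k x then lam k * (h (class_count k x + 1) - h (class_count k x)) else 0)
       + mu k * real (class_count k x) * (h (class_count k x - 1) - h (class_count k x))))
    = (\<Sum>x\<in>tl_space m n. pmf p x * (\<Sum>y\<in>tl_space m n.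
         tl_rate m n lam mu x y * (h (class_count k y) - h (class_count k x))))"
    by (intro sum.cong refl) (simp add: class_count_drift)
  also have "\<dots> = 0"
    by (rule stationary_generator_zero[OF st])
  finally show ?thesis .
qed

text \<open>Cut equation across \<open>{Z\<^sub>k \<le> z}\<close> (test function \<open>1(Z\<^sub>k \<le> z)\<close>): the accepted flow upwards
  balances the departure flow downwards.\<close>
lemma class_count_cut:
  assumes st: "tl_stationary m n lam mu p"
  shows "lam k * measure_pmf.prob p {x. accepts m n k x \<and> class_count k x = z}
       = mu k * real (Suc z) * measure_pmf.prob p {x. class_count k x = Suc z}"
proof -
  let ?S = "tl_space m n"
  have supp: "set_pmf p \<subseteq> ?S" using st unfolding tl_stationary_def by simp
  let ?h = "\<lambda>i. if i \<le> z then 1 else (0::real)"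
  have pointwise: "pmf p x *
      ((if accepts m n k x then lam k * (?h (class_count k x + 1) - ?h (class_count k x)) else 0)
       + mu k * real (class_count k x) * (?h (class_count k x - 1) - ?h (class_count k x)))
    = mu k * real (Suc z) * (if class_count k x = Suc z then pmf p x else 0)
      - lam k * (if accepts m n k x \<and> class_count k x = z then pmf p x else 0)" for x
    by (cases "class_count k x") auto
  have "0 = mu k * real (Suc z) * (\<Sum>x\<in>?S. if class_count k x = Suc z then pmf p x else 0)
      - lam k * (\<Sum>x\<in>?S. if accepts m n k x \<and> class_count k x = z then pmf p x else 0)"
    using class_count_balance[OF st, of k ?h]
    by (simp only: pointwise sum_subtractf flip: sum_distrib_left)
  then show ?thesis
    by (simp add: prob_finite_support[OF finite_tl_space supp])
qed

text \<open>Flow balance (test function \<open>Z\<^sub>k\<close>): accepted arrival rate equals throughput \<open>\<mu>\<^sub>k\<cdot>E Z\<^sub>k\<close>.\<close>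
lemma class_count_flow:
  assumes st: "tl_stationary m n lam mu p"
  shows "lam k * measure_pmf.prob p {x. accepts m n k x}
       = mu k * measure_pmf.expectation p (\<lambda>x. real (class_count k x))"
proof -
  let ?S = "tl_space m n"
  have supp: "set_pmf p \<subseteq> ?S" using st unfolding tl_stationary_def by simp
  have pointwise: "pmf p x *
      ((if accepts m n k x then lam k * (real (class_count k x + 1) - real (class_count k x)) else 0)
       + mu k * real (class_count k x) * (real (class_count k x - 1) - real (class_count k x)))
    = lam k * (if accepts m n k x then pmf p x else 0)
      - mu k * (real (class_count k x) * pmf p x)" for x
    by (cases "class_count k x") (auto simp: algebra_simps)
  have "0 = lam k * (\<Sum>x\<in>?S. if accepts m n k x then pmf p x else 0)
      - mu k * (\<Sum>x\<in>?S. real (class_count k x) * pmf p x)"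
    using class_count_balance[OF st, of k real]
    by (simp only: pointwise sum_subtractf flip: sum_distrib_left)
  then show ?thesis
    by (simp add: prob_finite_support[OF finite_tl_space supp]
        expectation_finite_support[OF finite_tl_space supp])
qed

lemma class_count_le:
  assumes "x \<in> tl_space m n"
  shows "class_count k x \<le> m k + n"
proof -
  have "snd x k \<le> (\<Sum>l\<in>UNIV. snd x l)" by (rule member_le_sum) auto
  moreover have "fst x k \<le> m k" "(\<Sum>l\<in>UNIV. snd x l) \<le> n"
    using assms unfolding tl_space_def by auto
  ultimately show ?thesis unfolding class_count_def by linarith
qed

lemma class_count_marginal_support:
  assumes st: "tl_stationary m n lam mu p"
  shows "set_pmf (map_pmf (class_count k) p) \<subseteq> {..m k + n}"
  using st class_count_le unfolding tl_stationary_def by fastforce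

text \<open>For the stationary law of \<open>Z\<^sub>k\<close>: the cut inequality holds everywhere (accepted arrivals are
  at most all arrivals), with equality below \<open>m\<^sub>k\<close> (where every arrival is accepted).\<close>
lemma class_count_marginal_cut:
  assumes lam: "lam k > 0" and mu: "mu k > 0" and st: "tl_stationary m n lam mu p"
  defines "q \<equiv> map_pmf (class_count k) p"
  shows "real (Suc z) * pmf q (Suc z) \<le> lam k / mu k * pmf q z"
    and "z < m k \<Longrightarrow> real (Suc z) * pmf q (Suc z) = lam k / mu k * pmf q z"
proof -
  have pmf_q: "pmf q i = measure_pmf.prob p {x. class_count k x = i}" for i
    unfolding q_def pmf_map by (simp add: vimage_def)
  have cut: "mu k * (real (Suc z) * pmf q (Suc z))
      = lam k * measure_pmf.prob p {x. accepts m n k x \<and> class_count k x = z}"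
    using class_count_cut[OF st, of k z] by (simp add: pmf_q mult.assoc)
  have "measure_pmf.prob p {x. accepts m n k x \<and> class_count k x = z} \<le> pmf q z"
    unfolding pmf_q by (rule measure_pmf.finite_measure_mono) auto
  with cut lam have "mu k * (real (Suc z) * pmf q (Suc z)) \<le> lam k * pmf q z"
    by (simp add: mult_left_mono)
  with mu show "real (Suc z) * pmf q (Suc z) \<le> lam k / mu k * pmf q z"
    by (simp add: field_simps)
  assume "z < m k"
  have "accepts m n k x" if "class_count k x = z" for x
    using that \<open>z < m k\<close> unfolding accepts_def class_count_def by simp
  then have "measure_pmf.prob p {x. accepts m n k x \<and> class_count k x = z} = pmf q z"
    unfolding pmf_q by (intro prob_eq_on_support) blast
  with cut mu show "real (Suc z) * pmf q (Suc z) = lam k / mu k * pmf q z"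
    by (simp add: field_simps)
qed

text \<open>Blocking probability via flow balance: \<open>b\<^sub>k = 1 - E Z\<^sub>k / \<rho>\<^sub>k\<close>.\<close>
lemma blocking_prob_eq:
  assumes lam: "lam k > 0" and mu: "mu k > 0" and st: "tl_stationary m n lam mu p"
  shows "measure_pmf.prob p (tl_block m n k)
       = 1 - measure_pmf.expectation p (\<lambda>x. real (class_count k x)) / (lam k / mu k)"
proof -
  have blocked_iff: "x \<in> tl_block m n k \<longleftrightarrow> \<not> accepts m n k x" if "x \<in> tl_space m n" for x
  proof -
    have "fst x k \<le> m k" "(\<Sum>l\<in>UNIV. snd x l) \<le> n"
      using that unfolding tl_space_def by auto
    with that show ?thesis unfolding tl_block_def accepts_def by auto
  qed
  have "set_pmf p \<subseteq> tl_space m n" using st unfolding tl_stationary_def by simp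
  then have "measure_pmf.prob p (tl_block m n k) = measure_pmf.prob p (UNIV - {x. accepts m n k x})"
    using blocked_iff by (intro prob_eq_on_support) blast
  also have "\<dots> = 1 - measure_pmf.prob p {x. accepts m n k x}"
    using measure_pmf.prob_compl[where A = "{x. accepts m n k x}" and M = p] by simp
  also have "measure_pmf.prob p {x. accepts m n k x}
      = measure_pmf.expectation p (\<lambda>x. real (class_count k x)) / (lam k / mu k)"
    using class_count_flow[OF st, of k] lam mu by (simp add: field_simps)
  finally show ?thesis .
qed

theorem theorem7:
  fixes m :: "'k::finite \<Rightarrow> nat" and n :: nat and lam mu :: "'k \<Rightarrow> real"
    and p :: "'k state pmf" and k :: 'k
  assumes "\<forall>l. lam l > 0" and "\<forall>l. mu l > 0"
    and "tl_stationary m n lam mu p"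
  shows "st_le (map_pmf real (erl_pmf (m k) (lam k / mu k)))
               (map_pmf (\<lambda>x. real (fst x k + snd x k)) p)
       \<and> st_le (map_pmf (\<lambda>x. real (fst x k + snd x k)) p)
               (map_pmf real (erl_pmf (m k + n) (lam k / mu k)))
       \<and> a_erl (m k) (lam k / mu k) \<le> measure_pmf.expectation p (\<lambda>x. real (fst x k + snd x k))
       \<and> measure_pmf.expectation p (\<lambda>x. real (fst x k + snd x k)) \<le> a_erl (m k + n) (lam k / mu k)
       \<and> mu k * a_erl (m k) (lam k / mu k)
           \<le> mu k * measure_pmf.expectation p (\<lambda>x. real (fst x k + snd x k))
       \<and> mu k * measure_pmf.expectation p (\<lambda>x. real (fst x k + snd x k))
           \<le> mu k * a_erl (m k + n) (lam k / mu k)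
       \<and> b_erl (m k + n) (lam k / mu k) \<le> measure_pmf.prob p (tl_block m n k)
       \<and> measure_pmf.prob p (tl_block m n k) \<le> b_erl (m k) (lam k / mu k)"
proof -
  define rho where "rho = lam k / mu k"
  define q where "q = map_pmf (class_count k) p"
  have lam: "lam k > 0" and mu: "mu k > 0" and st: "tl_stationary m n lam mu p"
    using assms by auto
  then have rho: "rho > 0" unfolding rho_def by simp
  have count_dist: "map_pmf (\<lambda>x. real (fst x k + snd x k)) p = map_pmf real q"
    unfolding q_def map_pmf_comp class_count_def ..
  have mean: "measure_pmf.expectation p (\<lambda>x. real (fst x k + snd x k)) = measure_pmf.expectation q real"
    unfolding q_def class_count_def by simp
  have supp_q: "set_pmf q \<subseteq> {..m k + n}"
    unfolding q_def by (rule class_count_marginal_support[OF st])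
  have supp_lo: "set_pmf (erl_pmf (m k) rho) \<subseteq> {..m k + n}"
    and supp_hi: "set_pmf (erl_pmf (m k + n) rho) \<subseteq> {..m k + n}"
    using set_pmf_erl_pmf[OF rho] by fastforce+
  have lower: "lr_le (erl_pmf (m k) rho) q"
    using class_count_marginal_cut(2)[OF lam mu st] unfolding q_def rho_def
    by (intro erl_lr_le_of_cut_eq[OF rho[unfolded rho_def]])
  have upper: "lr_le q (erl_pmf (m k + n) rho)"
    using class_count_marginal_cut(1)[OF lam mu st] unfolding q_def rho_def
    by (intro lr_le_erl_of_cut_le[OF rho[unfolded rho_def] supp_q[unfolded q_def]])
  have a_lo: "a_erl (m k) rho \<le> measure_pmf.expectation q real"
    and a_hi: "measure_pmf.expectation q real \<le> a_erl (m k + n) rho"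
    unfolding a_erl_def
    by (rule lr_le_expectation[OF lower supp_lo supp_q], rule lr_le_expectation[OF upper supp_q supp_hi])
  have blocking: "measure_pmf.prob p (tl_block m n k) = 1 - measure_pmf.expectation q real / rho"
    using blocking_prob_eq[OF lam mu st] unfolding q_def rho_def by simp
  have b_erl_eq: "b_erl s rho = 1 - a_erl s rho / rho" for s
    using a_erl_eq_b_erl[OF rho, of s] rho by (simp add: field_simps)
  show ?thesis
    unfolding rho_def[symmetric] count_dist mean blocking b_erl_eq
    using lr_le_st_le[OF lower supp_lo supp_q] lr_le_st_le[OF upper supp_q supp_hi]
      a_lo a_hi mu rho by (auto intro: mult_left_mono divide_right_mono)
qed

end
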